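(* For every finite multiset $\Gamma$ and formulas $\varphi,\chi$: if both $\Gamma\Rightarrow\varphi$ and $\varphi,\Gamma\Rightarrow\chi$ are provable in $\mathsf{G4iSLt}$, then $\Gamma\Rightarrow\chi$ is provable in $\mathsf{G4iSLt}$.
   Context: Formulas are built by the grammar $\varphi ::= p \mid \bot \mid \varphi\land\varphi \mid \varphi\lor\varphi \mid \varphi\to\varphi \mid \Box\varphi$, with $p$ ranging over a countably infinite set of propositional variables. For a multiset $\Gamma$, $\Box\Gamma=\{\Box\psi:\psi\in\Gamma\}$; a boxed formula is one of the form $\Box\psi$. A sequent is $\Gamma\Rightarrow\chi$ with $\Gamma$ a finite multiset of formulas and $\chi$ a formula. The sequent calculus $\mathsf{G4iSLt}$ has the following rules, where $p$ is a propositional variable and $\Phi$ always denotes a multiset containing no boxed formula: (⊥L) $\bot,\Gamma\Rightarrow\chi$ (no premise); (IdP) $\Gamma,p\Rightarrow p$ (no premise); (∧L) from $\Gamma,\varphi,\psi\Rightarrow\chi$ infer $\Gamma,\varphi\land\psi\Rightarrow\chi$; (∧R) from $\Gamma\Rightarrow\varphi$ and $\Gamma\Rightarrow\psi$ infer $\Gamma\Rightarrow\varphi\land\psi$; (∨L) from $\Gamma,\varphi\Rightarrow\chi$ and $\Gamma,\psi\Rightarrow\chi$ infer $\Gamma,\varphi\lor\psi\Rightarrow\chi$; (∨R$_i$), $i\in\{1,2\}$: from $\Gamma\Rightarrow\varphi_i$ infer $\Gamma\Rightarrow\varphi_1\lor\varphi_2$; (p→L) from $\Gamma,p,\varphi\Rightarrow\chi$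 infer $\Gamma,p,p\to\varphi\Rightarrow\chi$; (→R) from $\Gamma,\varphi\Rightarrow\psi$ infer $\Gamma\Rightarrow\varphi\to\psi$; (□→L) from $\Phi,\Gamma,\psi,\Box\varphi\Rightarrow\varphi$ and $\Phi,\Box\Gamma,\psi\Rightarrow\chi$ infer $\Phi,\Box\Gamma,\Box\varphi\to\psi\Rightarrow\chi$; (SLtR) from $\Phi,\Gamma,\Box\varphi\Rightarrow\varphi$ infer $\Phi,\Box\Gamma\Rightarrow\Box\varphi$; (∧→L) from $\Gamma,\varphi\to(\psi\to\chi)\Rightarrow\delta$ infer $\Gamma,(\varphi\land\psi)\to\chi\Rightarrow\delta$; (∨→L) from $\Gamma,\varphi\to\chi,\psi\to\chi\Rightarrow\delta$ infer $\Gamma,(\varphi\lor\psi)\to\chi\Rightarrow\delta$; (→→L) from $\Gamma,\psi\to\chi\Rightarrow\varphi\to\psi$ and $\Gamma,\chi\Rightarrow\delta$ infer $\Gamma,(\varphi\to\psi)\to\chi\Rightarrow\delta$. A proof of a sequent $S$ is a finite tree of sequents with root $S$ in which each interior node together with its children forms an instance of a rule (conclusion, premises) and each leaf is the conclusion of a premise-free rule; $S$ is provable if it has a proof. *)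

theory Defs
  imports Main "HOL-Library.Multiset"
begin

datatype form =
    Var nat
  | Bot
  | And form form
  | Or form form
  | Imp form form
  | Box form

fun is_box :: "form \<Rightarrow> bool" where
  "is_box (Box _) = True"
| "is_box _ = False"

definition no_box :: "form multiset \<Rightarrow> bool" where
  "no_box \<Phi> \<longleftrightarrow> (\<forall>x \<in># \<Phi>. \<not> is_box x)"

abbreviation boxes :: "form multiset \<Rightarrow> form multiset" where
  "boxes \<Gamma> \<equiv> image_mset Box \<Gamma>"

inductive G4iSLt :: "form multiset \<Rightarrow> form \<Rightarrow> bool" where
  BotL: "G4iSLt (add_mset Bot \<Gamma>) \<chi>"
| IdP: "G4iSLt (add_mset (Var p) \<Gamma>) (Var p)"
| AndL: "G4iSLt (add_mset \<phi> (add_mset \<psi> \<Gamma>)) \<chi> \<Longrightarrow>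
         G4iSLt (add_mset (And \<phi> \<psi>) \<Gamma>) \<chi>"
| AndR: "G4iSLt \<Gamma> \<phi> \<Longrightarrow> G4iSLt \<Gamma> \<psi> \<Longrightarrow> G4iSLt \<Gamma> (And \<phi> \<psi>)"
| OrL: "G4iSLt (add_mset \<phi> \<Gamma>) \<chi> \<Longrightarrow> G4iSLt (add_mset \<psi> \<Gamma>) \<chi> \<Longrightarrow>
        G4iSLt (add_mset (Or \<phi> \<psi>) \<Gamma>) \<chi>"
| OrR1: "G4iSLt \<Gamma> \<phi> \<Longrightarrow> G4iSLt \<Gamma> (Or \<phi> \<psi>)"
| OrR2: "G4iSLt \<Gamma> \<psi> \<Longrightarrow> G4iSLt \<Gamma> (Or \<phi> \<psi>)"
| PImpL: "G4iSLt (add_mset (Var p) (add_mset \<phi> \<Gamma>)) \<chi> \<Longrightarrow>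
          G4iSLt (add_mset (Var p) (add_mset (Imp (Var p) \<phi>) \<Gamma>)) \<chi>"
| ImpR: "G4iSLt (add_mset \<phi> \<Gamma>) \<psi> \<Longrightarrow> G4iSLt \<Gamma> (Imp \<phi> \<psi>)"
| BoxImpL: "no_box \<Phi> \<Longrightarrow>
            G4iSLt (\<Phi> + \<Gamma> + {#\<psi>, Box \<phi>#}) \<phi> \<Longrightarrow>
            G4iSLt (\<Phi> + boxes \<Gamma> + {#\<psi>#}) \<chi> \<Longrightarrow>
            G4iSLt (\<Phi> + boxes \<Gamma> + {#Imp (Box \<phi>) \<psi>#}) \<chi>"
| SLtR: "no_box \<Phi> \<Longrightarrow>
         G4iSLt (\<Phi> + \<Gamma> + {#Box \<phi>#}) \<phi> \<Longrightarrow>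
         G4iSLt (\<Phi> + boxes \<Gamma>) (Box \<phi>)"
| AndImpL: "G4iSLt (add_mset (Imp \<phi> (Imp \<psi> \<chi>)) \<Gamma>) \<delta> \<Longrightarrow>
            G4iSLt (add_mset (Imp (And \<phi> \<psi>) \<chi>) \<Gamma>) \<delta>"
| OrImpL: "G4iSLt (add_mset (Imp \<phi> \<chi>) (add_mset (Imp \<psi> \<chi>) \<Gamma>)) \<delta> \<Longrightarrow>
           G4iSLt (add_mset (Imp (Or \<phi> \<psi>) \<chi>) \<Gamma>) \<delta>"
| ImpImpL: "G4iSLt (add_mset (Imp \<psi> \<chi>) \<Gamma>) (Imp \<phi> \<psi>) \<Longrightarrow>
            G4iSLt (add_mset \<chi> \<Gamma>) \<delta> \<Longrightarrow>
            G4iSLt (add_mset (Imp (Imp \<phi> \<psi>) \<chi>) \<Gamma>) \<delta>"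

end

theory Submission
  imports Defs "HOL-Library.Multiset_Order"
begin

text \<open>Cut is eliminated by well-founded induction on a multiset measure rather than on
derivation height: every rule of G4iSLt has premises smaller than its conclusion for the multiset
extension of a weight on formulas, which lets the rules be handled uniformly as left rules, with a
principal formula in the antecedent, and right rules. A cut is permuted into a premise ending in a
left rule on another formula or, if the cut formula is principal in both premises, replaced by
cuts on smaller formulas. Two cases need more. When the right premise ends in \<open>\<rightarrow>\<rightarrow>L\<close> on a
context formula \<open>(a \<rightarrow> b) \<rightarrow> d\<close>, the left premise must first be inverted into one with
\<open>a, b \<rightarrow> d\<close> in its place, which itself needs cuts on \<open>b\<close> (Dyckhoff's lemma). A cut formula
\<open>\<box>c\<close> that a modal rule unboxes to \<open>c\<close> is removed by a cut on \<open>c\<close> against the premise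
\<open>\<box>c, \<Gamma> \<Rightarrow> c\<close> of the SLtR that introduced \<open>\<box>c\<close>, followed by a cut on \<open>\<box>c\<close> in a smaller
sequent.\<close>

section \<open>Modal contexts\<close>

fun unbox :: "form \<Rightarrow> form" where
  "unbox (Box a) = a"
| "unbox a = a"

lemma no_box_add_mset [simp]: "no_box (add_mset x \<Phi>) \<longleftrightarrow> \<not> is_box x \<and> no_box \<Phi>"
  by (simp add: no_box_def)

lemma is_box_iff: "is_box x \<longleftrightarrow> (\<exists>a. x = Box a)"
  by (cases x) auto

lemma unbox_non_box [simp]: "\<not> is_box x \<Longrightarrow> unbox x = x"
  by (cases x) auto

lemma unbox_no_box: "no_box \<Phi> \<Longrightarrow> image_mset unbox \<Phi> = \<Phi>"
  by (induction \<Phi>) auto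

lemma unbox_boxes [simp]: "image_mset unbox (boxes \<Delta>) = \<Delta>"
  by (induction \<Delta>) auto

lemma modal_context_exists: "\<exists>\<Phi> \<Delta>. no_box \<Phi> \<and> \<Gamma> = \<Phi> + boxes \<Delta>"
proof (induction \<Gamma>)
  case empty
  then show ?case by (auto simp: no_box_def)
next
  case (add x \<Gamma>)
  then obtain \<Phi> \<Delta> where \<Gamma>: "no_box \<Phi>" "\<Gamma> = \<Phi> + boxes \<Delta>" by blast
  show ?case
  proof (cases "is_box x")
    case True
    then obtain a where "x = Box a" by (auto simp: is_box_iff)
    with \<Gamma> have "add_mset x \<Gamma> = \<Phi> + boxes (add_mset a \<Delta>)" by simp
    with \<Gamma>(1) show ?thesis by blast
  next
    case False
    with \<Gamma> have "no_box (add_mset x \<Phi>)" "add_mset x \<Gamma> = add_mset x \<Phi> + boxes \<Delta>" by simp_all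
    then show ?thesis by blast
  qed
qed

text \<open>Every context has the form \<open>\<Phi> + \<box>\<Delta>\<close> of the conclusion of the modal rules, and
\<open>image_mset unbox\<close> turns it into the context \<open>\<Phi> + \<Delta>\<close> of their premises.\<close>

lemma SLtR_unbox:
  assumes "G4iSLt (add_mset (Box \<phi>) (image_mset unbox \<Gamma>)) \<phi>"
  shows "G4iSLt \<Gamma> (Box \<phi>)"
proof -
  obtain \<Phi> \<Delta> where "no_box \<Phi>" and \<Gamma>: "\<Gamma> = \<Phi> + boxes \<Delta>"
    using modal_context_exists by blast
  moreover have "G4iSLt (\<Phi> + \<Delta> + {#Box \<phi>#}) \<phi>"
    using assms \<open>no_box \<Phi>\<close> unfolding \<Gamma> by (simp add: unbox_no_box)
  ultimately show ?thesis using G4iSLt.SLtR by simp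
qed

lemma BoxImpL_unbox:
  assumes "G4iSLt (add_mset \<psi> (add_mset (Box \<phi>) (image_mset unbox \<Gamma>))) \<phi>"
    and "G4iSLt (add_mset \<psi> \<Gamma>) \<chi>"
  shows "G4iSLt (add_mset (Imp (Box \<phi>) \<psi>) \<Gamma>) \<chi>"
proof -
  obtain \<Phi> \<Delta> where "no_box \<Phi>" and \<Gamma>: "\<Gamma> = \<Phi> + boxes \<Delta>"
    using modal_context_exists by blast
  moreover have "G4iSLt (\<Phi> + \<Delta> + {#\<psi>, Box \<phi>#}) \<phi>"
    using assms(1) \<open>no_box \<Phi>\<close> unfolding \<Gamma> by (simp add: unbox_no_box add_mset_commute)
  moreover have "G4iSLt (\<Phi> + boxes \<Delta> + {#\<psi>#}) \<chi>"
    using assms(2) \<Gamma> by simp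
  ultimately show ?thesis using G4iSLt.BoxImpL by fastforce
qed

section \<open>Left and right rules\<close>

text \<open>The premises of the rules other than the two axioms, relative to a notion \<open>D\<close> of
derivability. A left rule with principal formula \<open>X\<close> and conclusion \<open>X, \<Gamma> \<Rightarrow> c\<close> has the main
premises \<open>Y + \<Gamma> \<Rightarrow> c\<close> for \<open>Y \<in> main_actives X\<close> and a side condition, which for \<open>p \<rightarrow> a\<close> is
the presence of \<open>p\<close> and for \<open>(a \<rightarrow> b) \<rightarrow> d\<close> and \<open>\<box>a \<rightarrow> b\<close> is the premise with a different
succedent.\<close>

fun main_actives :: "form \<Rightarrow> form multiset list" where
  "main_actives (And a b) = [{#a, b#}]"
| "main_actives (Or a b) = [{#a#}, {#b#}]"
| "main_actives (Imp (Var p) a) = [{#a#}]"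
| "main_actives (Imp (And a b) d) = [{#Imp a (Imp b d)#}]"
| "main_actives (Imp (Or a b) d) = [{#Imp a d, Imp b d#}]"
| "main_actives (Imp (Imp a b) d) = [{#d#}]"
| "main_actives (Imp (Box a) b) = [{#b#}]"
| "main_actives _ = []"

fun left_side_condition :: "(form multiset \<Rightarrow> form \<Rightarrow> bool) \<Rightarrow> form \<Rightarrow> form multiset \<Rightarrow> bool" where
  "left_side_condition D (And a b) \<Gamma> = True"
| "left_side_condition D (Or a b) \<Gamma> = True"
| "left_side_condition D (Imp (Var p) a) \<Gamma> = (Var p \<in># \<Gamma>)"
| "left_side_condition D (Imp (And a b) d) \<Gamma> = True"
| "left_side_condition D (Imp (Or a b) d) \<Gamma> = True"
| "left_side_condition D (Imp (Imp a b) d) \<Gamma> = D (add_mset (Imp b d) \<Gamma>) (Imp a b)"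
| "left_side_condition D (Imp (Box a) b) \<Gamma> =
    D (add_mset b (add_mset (Box a) (image_mset unbox \<Gamma>))) a"
| "left_side_condition D _ \<Gamma> = False"

definition left_premises ::
  "(form multiset \<Rightarrow> form \<Rightarrow> bool) \<Rightarrow> form \<Rightarrow> form multiset \<Rightarrow> form \<Rightarrow> bool" where
  "left_premises D X \<Gamma> c \<longleftrightarrow>
    left_side_condition D X \<Gamma> \<and> (\<forall>Y \<in> set (main_actives X). D (Y + \<Gamma>) c)"

fun right_premises :: "(form multiset \<Rightarrow> form \<Rightarrow> bool) \<Rightarrow> form multiset \<Rightarrow> form \<Rightarrow> bool" where
  "right_premises D \<Gamma> (And a b) = (D \<Gamma> a \<and> D \<Gamma> b)"
| "right_premises D \<Gamma> (Or a b) = (D \<Gamma> a \<or> D \<Gamma> b)"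
| "right_premises D \<Gamma> (Imp a b) = D (add_mset a \<Gamma>) b"
| "right_premises D \<Gamma> (Box a) = D (add_mset (Box a) (image_mset unbox \<Gamma>)) a"
| "right_premises D \<Gamma> _ = False"

lemma G4iSLt_left_rule: "left_premises G4iSLt X \<Gamma> c \<Longrightarrow> G4iSLt (add_mset X \<Gamma>) c"
proof (induction G4iSLt X \<Gamma> rule: left_side_condition.induct)
  case (3 p a \<Gamma>)
  then obtain \<Gamma>' where "\<Gamma> = add_mset (Var p) \<Gamma>'"
    by (auto simp: left_premises_def dest: multi_member_split)
  with 3 show ?case
    using G4iSLt.PImpL[of p a \<Gamma>' c] by (simp add: left_premises_def add_mset_commute)
qed (auto simp: left_premises_def add_mset_commute intro: G4iSLt.intros BoxImpL_unbox)

lemma G4iSLt_right_rule: "right_premises G4iSLt \<Gamma> c \<Longrightarrow> G4iSLt \<Gamma> c"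
  by (cases c) (auto intro: G4iSLt.intros SLtR_unbox)

lemma G4iSLt_BotL_mem: "Bot \<in># \<Gamma> \<Longrightarrow> G4iSLt \<Gamma> c"
  by (metis G4iSLt.BotL multi_member_split)

lemma G4iSLt_IdP_mem: "Var p \<in># \<Gamma> \<Longrightarrow> G4iSLt \<Gamma> (Var p)"
  by (metis G4iSLt.IdP multi_member_split)

lemma G4iSLt_uniform_induct [consumes 1, case_names BotL IdP Left Right]:
  assumes "G4iSLt \<Gamma> c"
    and "\<And>\<Gamma> c. Bot \<in># \<Gamma> \<Longrightarrow> P \<Gamma> c"
    and "\<And>\<Gamma> p. Var p \<in># \<Gamma> \<Longrightarrow> P \<Gamma> (Var p)"
    and "\<And>X \<Gamma> c. left_premises (\<lambda>\<Gamma> c. G4iSLt \<Gamma> c \<and> P \<Gamma> c) X \<Gamma> c \<Longrightarrow> P (add_mset X \<Gamma>) c"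
    and "\<And>\<Gamma> c. right_premises (\<lambda>\<Gamma> c. G4iSLt \<Gamma> c \<and> P \<Gamma> c) \<Gamma> c \<Longrightarrow> P \<Gamma> c"
  shows "P \<Gamma> c"
  using assms(1)
proof (induction rule: G4iSLt.induct)
  case (PImpL p \<phi> \<Gamma> \<chi>)
  then show ?case
    using assms(4)[of "Imp (Var p) \<phi>" "add_mset (Var p) \<Gamma>" \<chi>]
    by (simp add: left_premises_def add_mset_commute)
next
  case (BoxImpL \<Phi> \<Gamma> \<psi> \<phi> \<chi>)
  then show ?case
    using assms(4)[of "Imp (Box \<phi>) \<psi>" "\<Phi> + boxes \<Gamma>" \<chi>]
    by (simp add: left_premises_def unbox_no_box add_mset_commute)
next
  case (SLtR \<Phi> \<Gamma> \<phi>)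
  then show ?case
    using assms(5)[of "\<Phi> + boxes \<Gamma>" "Box \<phi>"] by (simp add: unbox_no_box)
qed (use assms(2-5) in \<open>force simp: left_premises_def\<close>)+

lemma left_premises_mono:
  "left_premises D X \<Gamma> c \<Longrightarrow> (\<And>\<Gamma> c. D \<Gamma> c \<Longrightarrow> D' \<Gamma> c) \<Longrightarrow> left_premises D' X \<Gamma> c"
  by (induction D X \<Gamma> rule: left_side_condition.induct) (auto simp: left_premises_def)

lemma right_premises_mono:
  "right_premises D \<Gamma> c \<Longrightarrow> (\<And>\<Gamma> c. D \<Gamma> c \<Longrightarrow> D' \<Gamma> c) \<Longrightarrow> right_premises D' \<Gamma> c"
  by (cases c) auto

lemma G4iSLt_uniform_cases [consumes 1, case_names BotL IdP Left Right]:
  assumes "G4iSLt \<Gamma> c"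
  obtains "Bot \<in># \<Gamma>"
  | p where "c = Var p" "Var p \<in># \<Gamma>"
  | X \<Delta> where "\<Gamma> = add_mset X \<Delta>" "left_premises G4iSLt X \<Delta> c"
  | "right_premises G4iSLt \<Gamma> c"
  using assms
  by (induction rule: G4iSLt_uniform_induct) (blast dest: left_premises_mono right_premises_mono)+

lemma left_premises_principal:
  assumes "left_premises D X \<Gamma> c"
  shows "X \<noteq> Var p" "\<not> is_box X"
  using assms by (auto simp: left_premises_def is_box_iff)

text \<open>The structural lemmas below all replace a part \<open>Z\<close> of the antecedent by \<open>W\<close>; the two
transfer lemmas reduce this to the premises, where the modal rules see \<open>Z\<close> and \<open>W\<close> unboxed.\<close>

lemma left_side_condition_transfer:
  assumes "left_side_condition D X (Z + \<Gamma>)"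
    and "\<And>\<Delta> e. D (Z + \<Delta>) e \<Longrightarrow> D' (W + \<Delta>) e"
    and "\<And>\<Delta> e. D (image_mset unbox Z + \<Delta>) e \<Longrightarrow> D' (image_mset unbox W + \<Delta>) e"
    and "\<And>p. Var p \<in># Z + \<Gamma> \<Longrightarrow> Var p \<in># W + \<Gamma>"
  shows "left_side_condition D' X (W + \<Gamma>)"
proof (cases X rule: main_actives.cases)
  case (3 p a)
  with assms(1,4) show ?thesis by simp
next
  case (6 a b d)
  with assms(1) show ?thesis using assms(2)[of "add_mset (Imp b d) \<Gamma>"] by simp
next
  case (7 a b)
  with assms(1) show ?thesis
    using assms(3)[of "add_mset b (add_mset (Box a) (image_mset unbox \<Gamma>))"] by simp
qed (use assms(1) in auto)

lemma left_premises_transfer: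
  assumes "left_premises D X \<Gamma>' c" and "\<Gamma>' = Z + \<Gamma>"
    and "\<And>\<Delta>. D (Z + \<Delta>) c \<Longrightarrow> D' (W + \<Delta>) c'"
    and "\<And>\<Delta> e. D (Z + \<Delta>) e \<Longrightarrow> D' (W + \<Delta>) e"
    and "\<And>\<Delta> e. D (image_mset unbox Z + \<Delta>) e \<Longrightarrow> D' (image_mset unbox W + \<Delta>) e"
    and "\<And>p. Var p \<in># Z + \<Gamma> \<Longrightarrow> Var p \<in># W + \<Gamma>"
  shows "left_premises D' X (W + \<Gamma>) c'"
proof -
  have "left_side_condition D X (Z + \<Gamma>)"
    using assms(1,2) by (simp add: left_premises_def)
  then have "left_side_condition D' X (W + \<Gamma>)"
    by (rule left_side_condition_transfer) (fact assms)+
  moreover have "D' (Y + (W + \<Gamma>)) c'" if "Y \<in> set (main_actives X)" for Y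
    using assms(1,2) assms(3)[of "Y + \<Gamma>"] that unfolding left_premises_def
    by (simp add: add.left_commute)
  ultimately show ?thesis unfolding left_premises_def by blast
qed

lemma right_premises_transfer:
  assumes "right_premises D \<Gamma>' c" and "\<Gamma>' = Z + \<Gamma>"
    and "\<And>\<Delta> e. D (Z + \<Delta>) e \<Longrightarrow> D' (W + \<Delta>) e"
    and "\<And>\<Delta> e. D (image_mset unbox Z + \<Delta>) e \<Longrightarrow> D' (image_mset unbox W + \<Delta>) e"
  shows "right_premises D' (W + \<Gamma>) c"
proof (cases c)
  case (Box a)
  then show ?thesis
    using assms(1,2) assms(4)[of "add_mset (Box a) (image_mset unbox \<Gamma>)"] by simp
next
  case (Imp a b)
  then show ?thesis using assms(1,2) assms(3)[of "add_mset a \<Gamma>"] by simp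
qed (use assms in auto)

section \<open>Admissible structural rules\<close>

lemma weakening: "G4iSLt \<Gamma> c \<Longrightarrow> G4iSLt (add_mset A \<Gamma>) c"
proof (induction arbitrary: A rule: G4iSLt_uniform_induct)
  case (Left X \<Gamma> c)
  have "left_premises G4iSLt X ({#A#} + \<Gamma>) c"
    by (rule left_premises_transfer[OF Left, where Z="{#}"]) auto
  then have "G4iSLt (add_mset X (add_mset A \<Gamma>)) c" by (simp add: G4iSLt_left_rule)
  then show ?case by (simp add: add_mset_commute)
next
  case (Right \<Gamma> c)
  have "right_premises G4iSLt ({#A#} + \<Gamma>) c"
    by (rule right_premises_transfer[OF Right, where Z="{#}"]) auto
  then show ?case by (simp add: G4iSLt_right_rule)
qed (auto intro: G4iSLt_BotL_mem G4iSLt_IdP_mem)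

lemma unboxing: "G4iSLt (add_mset (Box a) \<Gamma>) c \<Longrightarrow> G4iSLt (add_mset a \<Gamma>) c"
proof (induction "add_mset (Box a) \<Gamma>" c arbitrary: a \<Gamma> rule: G4iSLt_uniform_induct)
  case (Left X \<Delta> c)
  then have "X \<noteq> Box a" by (auto dest: left_premises_principal)
  then obtain K where K: "\<Delta> = add_mset (Box a) K" "\<Gamma> = add_mset X K"
    using Left.hyps(2) by (auto simp: add_eq_conv_ex)
  have "left_premises G4iSLt X ({#a#} + K) c"
    by (rule left_premises_transfer[OF Left.hyps(1), where Z="{#Box a#}"]; cases a) (auto simp: K)
  then show ?case using K by (simp add: G4iSLt_left_rule add_mset_commute)
next
  case (Right c)
  have "right_premises G4iSLt ({#a#} + \<Gamma>) c"
    by (rule right_premises_transfer[OF Right.hyps, where Z="{#Box a#}"]; cases a) auto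
  then show ?case by (simp add: G4iSLt_right_rule)
qed (auto intro: G4iSLt_BotL_mem G4iSLt_IdP_mem)

lemma unbox_antecedent: "G4iSLt (add_mset a \<Gamma>) c \<Longrightarrow> G4iSLt (add_mset (unbox a) \<Gamma>) c"
  by (cases a) (auto intro: unboxing)

lemma unbox_antecedents: "G4iSLt (\<Gamma> + \<Delta>) c \<Longrightarrow> G4iSLt (image_mset unbox \<Gamma> + \<Delta>) c"
proof (induction \<Gamma> arbitrary: \<Delta>)
  case (add x \<Gamma>)
  then have "G4iSLt (\<Gamma> + add_mset (unbox x) \<Delta>) c"
    using unbox_antecedent[of x "\<Gamma> + \<Delta>"] by simp
  then show ?case using add.IH by fastforce
qed simp

lemma contraction_atom:
  "G4iSLt (add_mset (Var p) (add_mset (Var p) \<Gamma>)) c \<Longrightarrow> G4iSLt (add_mset (Var p) \<Gamma>) c"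
proof (induction "add_mset (Var p) (add_mset (Var p) \<Gamma>)" c arbitrary: \<Gamma>
    rule: G4iSLt_uniform_induct)
  case (Left X \<Delta> c)
  then have "X \<noteq> Var p" by (auto dest: left_premises_principal)
  moreover have "X \<in># add_mset (Var p) (add_mset (Var p) \<Gamma>)"
    by (metis Left.hyps(2) union_single_eq_member)
  ultimately have "X \<in># \<Gamma>" by simp
  then obtain K where K: "\<Gamma> = add_mset X K" by (blast dest: multi_member_split)
  with Left.hyps(2) have \<Delta>: "\<Delta> = {#Var p, Var p#} + K" by (simp add: add_mset_commute)
  have "left_premises G4iSLt X ({#Var p#} + K) c"
    by (rule left_premises_transfer[OF Left.hyps(1) \<Delta>]) auto
  then show ?case using K by (simp add: G4iSLt_left_rule add_mset_commute)
next
  case (Right c)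
  have "right_premises G4iSLt ({#Var p#} + \<Gamma>) c"
    by (rule right_premises_transfer[OF Right.hyps, where Z="{#Var p, Var p#}"]) auto
  then show ?case by (simp add: G4iSLt_right_rule)
qed (auto intro: G4iSLt_BotL_mem G4iSLt_IdP_mem)

section \<open>Measures\<close>

text \<open>\<open>And\<close> weighs more than \<open>Or\<close> and \<open>Imp\<close> so that the premise \<open>a \<rightarrow> (b \<rightarrow> d)\<close> of
\<open>\<and>\<rightarrow>L\<close> is lighter than \<open>(a \<and> b) \<rightarrow> d\<close>.\<close>

fun weight :: "form \<Rightarrow> nat" where
  "weight (Var p) = 1"
| "weight Bot = 1"
| "weight (And a b) = weight a + weight b + 2"
| "weight (Or a b) = weight a + weight b + 1"
| "weight (Imp a b) = weight a + weight b + 1"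
| "weight (Box a) = weight a + 1"

text \<open>A formula counts slightly more as succedent than in the antecedent: this makes the premise
\<open>\<box>a, \<Gamma> \<Rightarrow> a\<close> of SLtR smaller than its conclusion \<open>\<Gamma> \<Rightarrow> \<box>a\<close>.\<close>

definition antecedent_weight :: "form \<Rightarrow> nat" where
  "antecedent_weight a = 2 * weight a"

definition succedent_weight :: "form \<Rightarrow> nat" where
  "succedent_weight a = 2 * weight a + 1"

definition sequent_measure :: "form multiset \<Rightarrow> form \<Rightarrow> nat multiset" where
  "sequent_measure \<Gamma> c = add_mset (succedent_weight c) (image_mset antecedent_weight \<Gamma>)"

lemma weight_pos: "0 < weight a"
  by (cases a) auto

lemma antecedent_weight_unbox:
  "image_mset antecedent_weight (image_mset unbox \<Gamma>) \<le> image_mset antecedent_weight \<Gamma>"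
proof (induction \<Gamma>)
  case (add x \<Gamma>)
  have "antecedent_weight (unbox x) \<le> antecedent_weight x"
    by (cases x) (auto simp: antecedent_weight_def)
  with add.IH show ?case by (simp add: add_mset_le_le_le)
qed simp

lemma sequent_measure_less:
  assumes "image_mset antecedent_weight \<Delta>' \<le> image_mset antecedent_weight \<Delta>"
    and "\<forall>x \<in># add_mset (succedent_weight c') (image_mset antecedent_weight E').
      x < antecedent_weight X"
  shows "sequent_measure (E' + \<Delta>') c' < sequent_measure (add_mset X (E + \<Delta>)) c"
proof -
  have "add_mset (succedent_weight c') (image_mset antecedent_weight E')
      < add_mset (succedent_weight c)
          (add_mset (antecedent_weight X) (image_mset antecedent_weight E))"
    using assms(2) by (intro ex_gt_imp_less_multiset) auto
  from add_less_le_mono[OF this assms(1)] show ?thesis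
    by (simp add: sequent_measure_def)
qed

lemma sequent_measure_main_less:
  "Y \<in> set (main_actives X) \<Longrightarrow> sequent_measure (Y + \<Gamma>) c < sequent_measure (add_mset X \<Gamma>) c"
  by (induction X rule: main_actives.induct)
    (auto simp: sequent_measure_def antecedent_weight_def intro!: add_mset_lt_right_lt)

lemma sequent_measure_ImpImpL_side:
  "sequent_measure (add_mset (Imp b d) \<Gamma>) (Imp a b)
    < sequent_measure (add_mset (Imp (Imp a b) d) \<Gamma>) c"
  using sequent_measure_less[OF order_refl,
      where c'="Imp a b" and E'="{#Imp b d#}" and X="Imp (Imp a b) d" and E="{#}" and \<Delta>=\<Gamma>]
  by (simp add: antecedent_weight_def succedent_weight_def weight_pos)

lemma sequent_measure_ImpImpL_inverted:
  "sequent_measure (add_mset a (add_mset (Imp b d) \<Gamma>)) b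
    < sequent_measure (add_mset (Imp (Imp a b) d) \<Gamma>) c"
  using sequent_measure_less[OF order_refl,
      where c'=b and E'="{#a, Imp b d#}" and X="Imp (Imp a b) d" and E="{#}" and \<Delta>=\<Gamma>]
  by (simp add: antecedent_weight_def succedent_weight_def weight_pos)

lemma sequent_measure_BoxImpL_side:
  "sequent_measure (add_mset b (add_mset (Box a) (image_mset unbox \<Gamma>))) a
    < sequent_measure (add_mset (Imp (Box a) b) \<Gamma>) c"
  using sequent_measure_less[OF antecedent_weight_unbox,
      where c'=a and E'="{#b, Box a#}" and X="Imp (Box a) b" and E="{#}"]
  by (simp add: antecedent_weight_def succedent_weight_def)

lemma sequent_measure_succedent_less:
  "weight a < weight c \<Longrightarrow> sequent_measure \<Gamma> a < sequent_measure \<Gamma> c"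
  by (simp add: sequent_measure_def succedent_weight_def add_mset_lt_left_lt)

lemma sequent_measure_ImpR:
  "sequent_measure (add_mset a \<Gamma>) b < sequent_measure \<Gamma> (Imp a b)"
  by (simp add: sequent_measure_def antecedent_weight_def succedent_weight_def
      ex_gt_imp_less_multiset)

lemma sequent_measure_SLtR:
  "sequent_measure (add_mset (Box a) (image_mset unbox \<Gamma>)) a < sequent_measure \<Gamma> (Box a)"
proof -
  have "{#antecedent_weight (Box a), succedent_weight a#} < {#succedent_weight (Box a)#}"
    by (simp add: antecedent_weight_def succedent_weight_def)
  from add_less_le_mono[OF this antecedent_weight_unbox] show ?thesis
    by (simp add: sequent_measure_def add_mset_commute)
qed

lemma left_premises_measure_less:
  "left_premises D X \<Gamma> c \<Longrightarrow>
    left_premises (\<lambda>\<Gamma>' c'. D \<Gamma>' c' \<and> sequent_measure \<Gamma>' c' < sequent_measure (add_mset X \<Gamma>) c)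
      X \<Gamma> c"
  by (induction D X \<Gamma> rule: left_side_condition.induct)
    (auto simp: left_premises_def sequent_measure_main_less sequent_measure_ImpImpL_side
      sequent_measure_BoxImpL_side simp del: main_actives.simps)

lemma right_premises_measure_less:
  "right_premises D \<Gamma> c \<Longrightarrow>
    right_premises (\<lambda>\<Gamma>' c'. D \<Gamma>' c' \<and> sequent_measure \<Gamma>' c' < sequent_measure \<Gamma> c) \<Gamma> c"
  by (cases c) (auto simp: sequent_measure_succedent_less sequent_measure_ImpR sequent_measure_SLtR)

section \<open>Invertibility\<close>

text \<open>\<open>X\<close> can be replaced by \<open>Y\<close> as long as this is possible where \<open>X\<close> is principal; the bound
\<open>M\<close> on the sequents considered there lets that case use cuts below a fixed measure.\<close>

lemma replace_antecedent:
  assumes "G4iSLt (add_mset X \<Gamma>) c" and "sequent_measure (add_mset X \<Gamma>) c \<le> M"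
    and "X \<noteq> Bot" "\<And>p. X \<noteq> Var p" "\<not> is_box X"
    and principal: "\<And>\<Gamma> c. sequent_measure (add_mset X \<Gamma>) c \<le> M \<Longrightarrow> left_premises G4iSLt X \<Gamma> c
      \<Longrightarrow> G4iSLt (Y + \<Gamma>) c"
  shows "G4iSLt (Y + \<Gamma>) c"
  using assms(1,2)
proof (induction "add_mset X \<Gamma>" c arbitrary: \<Gamma> rule: G4iSLt_uniform_induct)
  case (BotL c)
  then show ?case using assms(3) by (auto intro: G4iSLt_BotL_mem)
next
  case (IdP p)
  then show ?case using assms(4) by (auto intro: G4iSLt_IdP_mem)
next
  case (Left X' \<Delta> c)
  show ?case
  proof (cases "X' = X")
    case True
    with Left show ?thesis by (auto intro: principal elim!: left_premises_mono)
  next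
    case False
    with Left.hyps(2) obtain K where K: "\<Delta> = {#X#} + K" "\<Gamma> = add_mset X' K"
      by (auto simp: add_eq_conv_ex)
    have bound: "m \<le> M" if "m < sequent_measure (add_mset X' \<Delta>) c" for m
      using that Left.prems K by (simp add: add_mset_commute)
    have "left_premises G4iSLt X' (Y + K) c"
      by (rule left_premises_transfer[OF left_premises_measure_less[OF Left.hyps(1)] K(1)])
        (use assms(4,5) in \<open>auto simp: bound intro: unbox_antecedents\<close>)
    then show ?thesis using K by (simp add: G4iSLt_left_rule)
  qed
next
  case (Right c)
  have "right_premises G4iSLt (Y + \<Gamma>) c"
    by (rule right_premises_transfer[OF right_premises_measure_less[OF Right.hyps],
          where Z="{#X#}"])
      (use Right.prems assms(5) in \<open>auto intro: unbox_antecedents\<close>)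
  then show ?case by (rule G4iSLt_right_rule)
qed

lemma left_inversion:
  assumes "G4iSLt (add_mset X \<Gamma>) c" and "Y \<in> set (main_actives X)"
  shows "G4iSLt (Y + \<Gamma>) c"
proof (rule replace_antecedent[OF assms(1) order_refl])
  show "X \<noteq> Bot" "X \<noteq> Var p" "\<not> is_box X" for p
    using assms(2) by (auto simp: is_box_iff)
qed (use assms(2) in \<open>auto simp: left_premises_def\<close>)

lemma AndL_inversion:
  "G4iSLt (add_mset (And a b) \<Gamma>) c \<Longrightarrow> G4iSLt (add_mset a (add_mset b \<Gamma>)) c"
  using left_inversion[of "And a b" \<Gamma> c "{#a, b#}"] by simp

lemma OrL_inversion:
  assumes "G4iSLt (add_mset (Or a b) \<Gamma>) c"
  shows "G4iSLt (add_mset a \<Gamma>) c" "G4iSLt (add_mset b \<Gamma>) c"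
  using left_inversion[OF assms, of "{#a#}"] left_inversion[OF assms, of "{#b#}"] by simp_all

lemma BoxImpL_inversion:
  "G4iSLt (add_mset (Imp (Box a) b) \<Gamma>) c \<Longrightarrow> G4iSLt (add_mset b \<Gamma>) c"
  using left_inversion[of "Imp (Box a) b" \<Gamma> c "{#b#}"] by simp

lemma ImpR_inversion: "G4iSLt \<Gamma> (Imp a b) \<Longrightarrow> G4iSLt (add_mset a \<Gamma>) b"
proof (induction \<Gamma> "Imp a b" arbitrary: a b rule: G4iSLt_uniform_induct)
  case (Left X \<Gamma>)
  have "left_premises G4iSLt X ({#a#} + \<Gamma>) b"
    by (rule left_premises_transfer[OF Left, where Z="{#}"]) (auto intro: weakening)
  then show ?case by (simp add: G4iSLt_left_rule add_mset_commute)
next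
  case Right
  then show ?case by auto
qed (auto intro: G4iSLt_BotL_mem)

section \<open>Identity and modus ponens\<close>

lemma modus_ponens_And:
  assumes mp_x: "\<And>\<Gamma> b e. G4iSLt (add_mset b (add_mset x \<Gamma>)) e
      \<Longrightarrow> G4iSLt (add_mset (Imp x b) (add_mset x \<Gamma>)) e"
    and mp_y: "\<And>\<Gamma> b e. G4iSLt (add_mset b (add_mset y \<Gamma>)) e
      \<Longrightarrow> G4iSLt (add_mset (Imp y b) (add_mset y \<Gamma>)) e"
    and "G4iSLt (add_mset b (add_mset (And x y) \<Gamma>)) e"
  shows "G4iSLt (add_mset (Imp (And x y) b) (add_mset (And x y) \<Gamma>)) e"
proof -
  have "G4iSLt (add_mset b (add_mset y (add_mset x \<Gamma>))) e"
    using AndL_inversion[of x y "add_mset b \<Gamma>"] assms(3) by (simp add: add_mset_commute)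
  then have "G4iSLt (add_mset (Imp y b) (add_mset y (add_mset x \<Gamma>))) e" by (rule mp_y)
  then have "G4iSLt (add_mset (Imp x (Imp y b)) (add_mset x (add_mset y \<Gamma>))) e"
    using mp_x[of "Imp y b" "add_mset y \<Gamma>"] by (simp add: add_mset_commute)
  then have "G4iSLt (add_mset (Imp (And x y) b) (add_mset x (add_mset y \<Gamma>))) e"
    by (rule G4iSLt.AndImpL)
  then show ?thesis
    using G4iSLt.AndL[of x y "add_mset (Imp (And x y) b) \<Gamma>" e] by (simp add: add_mset_commute)
qed

lemma modus_ponens_Or:
  assumes mp_x: "\<And>\<Gamma> b e. G4iSLt (add_mset b (add_mset x \<Gamma>)) e
      \<Longrightarrow> G4iSLt (add_mset (Imp x b) (add_mset x \<Gamma>)) e"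
    and mp_y: "\<And>\<Gamma> b e. G4iSLt (add_mset b (add_mset y \<Gamma>)) e
      \<Longrightarrow> G4iSLt (add_mset (Imp y b) (add_mset y \<Gamma>)) e"
    and "G4iSLt (add_mset b (add_mset (Or x y) \<Gamma>)) e"
  shows "G4iSLt (add_mset (Imp (Or x y) b) (add_mset (Or x y) \<Gamma>)) e"
proof -
  have "G4iSLt (add_mset b (add_mset x \<Gamma>)) e" and "G4iSLt (add_mset b (add_mset y \<Gamma>)) e"
    using assms(3) OrL_inversion[of x y "add_mset b \<Gamma>" e] by (simp_all add: add_mset_commute)
  from mp_x[OF this(1)] mp_y[OF this(2)]
  have "G4iSLt (add_mset x (add_mset (Imp x b) (add_mset (Imp y b) \<Gamma>))) e"
    and "G4iSLt (add_mset y (add_mset (Imp x b) (add_mset (Imp y b) \<Gamma>))) e"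
    using weakening[of "add_mset (Imp x b) (add_mset x \<Gamma>)" e "Imp y b"]
      weakening[of "add_mset (Imp y b) (add_mset y \<Gamma>)" e "Imp x b"]
    by (simp_all add: add_mset_commute)
  then have "G4iSLt (add_mset (Or x y) (add_mset (Imp x b) (add_mset (Imp y b) \<Gamma>))) e"
    by (rule G4iSLt.OrL)
  then show ?thesis
    using G4iSLt.OrImpL[of x b y "add_mset (Or x y) \<Gamma>" e] by (simp add: add_mset_commute)
qed

lemma identity_and_modus_ponens:
  "G4iSLt (add_mset d \<Gamma>) d"
  "G4iSLt (add_mset b (add_mset d \<Gamma>)) e \<Longrightarrow> G4iSLt (add_mset (Imp d b) (add_mset d \<Gamma>)) e"
proof (induction d arbitrary: \<Gamma> b e)
  case (Var p)
  { case 1 show ?case by (rule G4iSLt.IdP) }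
  { case 2 show ?case
      by (rule G4iSLt_left_rule) (use 2 in \<open>simp add: left_premises_def add_mset_commute\<close>) }
next
  case Bot
  { case 1 show ?case by (rule G4iSLt.BotL) }
  { case 2 show ?case by (simp add: G4iSLt_BotL_mem) }
next
  case (And x y)
  { case 1 show ?case
      by (rule G4iSLt.AndL, rule G4iSLt.AndR)
        (use And.IH(1)[of "add_mset y \<Gamma>"] And.IH(3)[of "add_mset x \<Gamma>"] in
          \<open>simp_all add: add_mset_commute\<close>) }
  { case 2 show ?case by (rule modus_ponens_And[OF And.IH(2) And.IH(4) 2]) }
next
  case (Or x y)
  { case 1 show ?case by (rule G4iSLt.OrL[OF G4iSLt.OrR1[OF Or.IH(1)] G4iSLt.OrR2[OF Or.IH(3)]]) }
  { case 2 show ?case by (rule modus_ponens_Or[OF Or.IH(2) Or.IH(4) 2]) }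
next
  case (Imp x y)
  have identity: "G4iSLt (add_mset (Imp x y) \<Gamma>) (Imp x y)" for \<Gamma>
    by (rule G4iSLt.ImpR) (use Imp.IH(2)[OF Imp.IH(3)] in \<open>simp add: add_mset_commute\<close>)
  { case 1 show ?case by (rule identity) }
  { case 2
    have "G4iSLt (add_mset (Imp y b) (add_mset (Imp x y) \<Gamma>)) (Imp x y)"
      using identity[of "add_mset (Imp y b) \<Gamma>"] by (simp add: add_mset_commute)
    from G4iSLt.ImpImpL[OF this 2] show ?case . }
next
  case (Box x)
  { case 1 show ?case
      by (rule SLtR_unbox) (use Box.IH(1) in \<open>simp add: add_mset_commute\<close>) }
  { case 2 show ?case
      by (rule BoxImpL_unbox)
        (use 2 Box.IH(1)[of "add_mset b (add_mset (Box x) (image_mset unbox \<Gamma>))"] in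
          \<open>simp_all add: add_mset_commute\<close>) }
qed

section \<open>Cut\<close>

text \<open>Counting the context and the cut formula in the succedent twice makes the measure of a cut
dominate twice the measure of its left premise; this is what pays for the cuts on \<open>b\<close> inside
the inversion of \<open>(a \<rightarrow> b) \<rightarrow> d\<close> (\<open>cut_measure_ImpImpL_inversion\<close>).\<close>

definition cut_measure :: "form \<Rightarrow> form multiset \<Rightarrow> form \<Rightarrow> nat multiset" where
  "cut_measure A \<Gamma> c = sequent_measure \<Gamma> c + sequent_measure \<Gamma> c
    + {#succedent_weight A, succedent_weight A, antecedent_weight A#}"

lemma cut_measure_mono:
  "sequent_measure \<Delta> d < sequent_measure \<Gamma> c \<Longrightarrow> cut_measure A \<Delta> d < cut_measure A \<Gamma> c"
  unfolding cut_measure_def by (intro add_strict_right_mono add_strict_mono)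

lemma cut_measure_subformula:
  assumes "image_mset antecedent_weight \<Delta> \<le> image_mset antecedent_weight \<Gamma>"
    and "\<forall>x \<in># E. weight x < weight A" and "weight B < weight A"
    and "d = c \<or> weight d < weight A"
  shows "cut_measure B (E + \<Delta>) d < cut_measure A \<Gamma> c"
proof -
  let ?E = "image_mset antecedent_weight E"
  have small: "\<forall>x \<in># ?E + ?E + {#succedent_weight B, succedent_weight B, antecedent_weight B#}.
      x < succedent_weight A"
    using assms(2,3) by (auto simp: antecedent_weight_def succedent_weight_def)
  show ?thesis
  proof (cases "d = c")
    case True
    have "?E + ?E + {#succedent_weight B, succedent_weight B, antecedent_weight B#}
        < {#succedent_weight A, succedent_weight A, antecedent_weight A#}"
      using small by (intro ex_gt_imp_less_multiset) auto
    from add_less_le_mono[OF this add_mono[OF assms(1) assms(1)]] True show ?thesis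
      by (simp add: cut_measure_def sequent_measure_def ac_simps)
  next
    case False
    with assms(4) have "?E + ?E + {#succedent_weight d, succedent_weight d,
          succedent_weight B, succedent_weight B, antecedent_weight B#}
        < {#succedent_weight c, succedent_weight c, succedent_weight A, succedent_weight A,
          antecedent_weight A#}"
      using small by (intro ex_gt_imp_less_multiset) (auto simp: succedent_weight_def)
    from add_less_le_mono[OF this add_mono[OF assms(1) assms(1)]] show ?thesis
      by (simp add: cut_measure_def sequent_measure_def ac_simps)
  qed
qed

lemma cut_measure_unbox:
  assumes "sequent_measure \<Delta> d \<le> sequent_measure \<Gamma> c"
  shows "cut_measure a (add_mset (Box a) \<Delta>) d < cut_measure (Box a) \<Gamma> c"
proof -
  have "{#antecedent_weight (Box a), antecedent_weight (Box a),
      succedent_weight a, succedent_weight a, antecedent_weight a#}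
    < {#succedent_weight (Box a), succedent_weight (Box a), antecedent_weight (Box a)#}"
    by (rule ex_gt_imp_less_multiset) (auto simp: antecedent_weight_def succedent_weight_def)
  from add_le_less_mono[OF add_mono[OF assms assms] this] show ?thesis
    by (simp add: cut_measure_def sequent_measure_def add_mset_commute)
qed

lemma cut_measure_ImpImpL_inversion:
  fixes a b d :: form defines "F \<equiv> Imp (Imp a b) d"
  assumes le: "sequent_measure (add_mset F \<Delta>) e \<le> sequent_measure (add_mset F \<Gamma>) A"
  shows "cut_measure b (add_mset a (add_mset (Imp b d) \<Delta>)) e < cut_measure A (add_mset F \<Gamma>) c"
proof -
  let ?\<Delta>e = "image_mset antecedent_weight \<Delta> + image_mset antecedent_weight \<Delta>
    + {#succedent_weight e, succedent_weight e#}"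
  have "cut_measure b (add_mset a (add_mset (Imp b d) \<Delta>)) e
      = {#antecedent_weight a, antecedent_weight a, antecedent_weight (Imp b d),
        antecedent_weight (Imp b d), succedent_weight b, succedent_weight b,
        antecedent_weight b#} + ?\<Delta>e"
    by (simp add: cut_measure_def sequent_measure_def)
  also have "\<dots> < {#antecedent_weight F, antecedent_weight F#} + ?\<Delta>e"
    by (intro add_strict_right_mono ex_gt_imp_less_multiset)
      (auto simp: F_def antecedent_weight_def succedent_weight_def)
  also have "\<dots> = sequent_measure (add_mset F \<Delta>) e + sequent_measure (add_mset F \<Delta>) e"
    by (simp add: sequent_measure_def)
  also have "\<dots> \<le> sequent_measure (add_mset F \<Gamma>) A + sequent_measure (add_mset F \<Gamma>) A"
    by (rule add_mono[OF le le])
  also have "\<dots> \<le> cut_measure A (add_mset F \<Gamma>) c"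
    unfolding cut_measure_def sequent_measure_def by simp
  finally show ?thesis .
qed

definition cut_below :: "nat multiset \<Rightarrow> bool" where
  "cut_below M \<longleftrightarrow>
    (\<forall>A \<Gamma> c. cut_measure A \<Gamma> c < M \<longrightarrow> G4iSLt \<Gamma> A \<longrightarrow> G4iSLt (add_mset A \<Gamma>) c \<longrightarrow> G4iSLt \<Gamma> c)"

lemma cut_belowD:
  "cut_below M \<Longrightarrow> cut_measure A \<Gamma> c < M \<Longrightarrow> G4iSLt \<Gamma> A \<Longrightarrow> G4iSLt (add_mset A \<Gamma>) c
    \<Longrightarrow> G4iSLt \<Gamma> c"
  unfolding cut_below_def by blast

lemma cut_subformula:
  assumes "cut_below (cut_measure A \<Gamma> c)"
    and "image_mset antecedent_weight \<Delta> \<le> image_mset antecedent_weight \<Gamma>"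
    and "\<forall>x \<in># E. weight x < weight A" and "weight B < weight A"
    and "d = c \<or> weight d < weight A"
    and "G4iSLt (E + \<Delta>) B" and "G4iSLt (add_mset B (E + \<Delta>)) d"
  shows "G4iSLt (E + \<Delta>) d"
  using assms by (blast intro: cut_belowD cut_measure_subformula)

lemma cut_subformula_same_context:
  assumes "cut_below (cut_measure A \<Gamma> c)"
    and "G4iSLt \<Gamma> B" and "G4iSLt (add_mset B \<Gamma>) d"
    and "weight B < weight A" and "d = c \<or> weight d < weight A"
  shows "G4iSLt \<Gamma> d"
proof -
  have "G4iSLt ({#} + \<Gamma>) d"
    by (rule cut_subformula[OF assms(1) order_refl, where B=B]) (use assms(2-) in simp_all)
  then show ?thesis by simp
qed

lemma cut_subformula_add_mset:
  assumes "cut_below (cut_measure A \<Gamma> c)"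
    and "G4iSLt (add_mset x \<Gamma>) B" and "G4iSLt (add_mset B (add_mset x \<Gamma>)) d"
    and "weight x < weight A" and "weight B < weight A" and "d = c \<or> weight d < weight A"
  shows "G4iSLt (add_mset x \<Gamma>) d"
proof -
  have "G4iSLt ({#x#} + \<Gamma>) d"
    by (rule cut_subformula[OF assms(1) order_refl, where B=B]) (use assms(2-) in simp_all)
  then show ?thesis by simp
qed

lemma cut_unboxed_context:
  assumes cut: "cut_below (cut_measure A \<Gamma> c)"
    and less: "sequent_measure \<Delta> d < sequent_measure \<Gamma> c"
    and left: "G4iSLt \<Delta> A"
    and box: "\<And>a. A = Box a \<Longrightarrow> G4iSLt (add_mset (Box a) \<Delta>) a"
    and right: "G4iSLt (add_mset (unbox A) \<Delta>) d"
  shows "G4iSLt \<Delta> d"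
proof (cases "is_box A")
  case True
  then obtain a where A: "A = Box a" by (auto simp: is_box_iff)
  have "G4iSLt (add_mset (Box a) \<Delta>) d"
  proof (rule cut_belowD[OF cut])
    show "cut_measure a (add_mset (Box a) \<Delta>) d < cut_measure A \<Gamma> c"
      using A less by (simp add: cut_measure_unbox)
    show "G4iSLt (add_mset (Box a) \<Delta>) a" by (rule box[OF A])
    show "G4iSLt (add_mset a (add_mset (Box a) \<Delta>)) d"
      using weakening[of "add_mset a \<Delta>" d "Box a"] right A by (simp add: add_mset_commute)
  qed
  with A show ?thesis using cut_belowD[OF cut cut_measure_mono[OF less] left] by simp
next
  case False
  with right have "G4iSLt (add_mset A \<Delta>) d" by simp
  from cut_belowD[OF cut cut_measure_mono[OF less] left this] show ?thesis .
qed

lemma cut_principal_And: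
  assumes cut: "cut_below (cut_measure (And a b) \<Gamma> c)"
    and a: "G4iSLt \<Gamma> a" and b: "G4iSLt \<Gamma> b" and main: "G4iSLt (add_mset a (add_mset b \<Gamma>)) c"
  shows "G4iSLt \<Gamma> c"
proof -
  have "G4iSLt (add_mset b (add_mset a \<Gamma>)) c" using main by (simp add: add_mset_commute)
  from cut_subformula_add_mset[OF cut weakening[OF b] this] have "G4iSLt (add_mset a \<Gamma>) c"
    by simp
  from cut_subformula_same_context[OF cut a this] show ?thesis by simp
qed

lemma cut_principal_Or:
  assumes cut: "cut_below (cut_measure (Or a b) \<Gamma> c)"
    and "G4iSLt \<Gamma> a \<or> G4iSLt \<Gamma> b" and "G4iSLt (add_mset a \<Gamma>) c" "G4iSLt (add_mset b \<Gamma>) c"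
  shows "G4iSLt \<Gamma> c"
  using assms(2)
proof
  assume "G4iSLt \<Gamma> a"
  from cut_subformula_same_context[OF cut this assms(3)] show ?thesis by simp
next
  assume "G4iSLt \<Gamma> b"
  from cut_subformula_same_context[OF cut this assms(4)] show ?thesis by simp
qed

lemma cut_principal_PImp:
  assumes cut: "cut_below (cut_measure (Imp (Var p) a) \<Gamma> c)"
    and "G4iSLt (add_mset (Var p) \<Gamma>) a" and "Var p \<in># \<Gamma>" and main: "G4iSLt (add_mset a \<Gamma>) c"
  shows "G4iSLt \<Gamma> c"
proof -
  obtain \<Gamma>' where \<Gamma>: "\<Gamma> = add_mset (Var p) \<Gamma>'" using assms(3) by (blast dest: multi_member_split)
  have "G4iSLt \<Gamma> a" using assms(2) unfolding \<Gamma> by (rule contraction_atom)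
  from cut_subformula_same_context[OF cut this main] show ?thesis by simp
qed

lemma cut_principal_AndImp:
  assumes cut: "cut_below (cut_measure (Imp (And a b) d) \<Gamma> c)"
    and "G4iSLt (add_mset (And a b) \<Gamma>) d" and main: "G4iSLt (add_mset (Imp a (Imp b d)) \<Gamma>) c"
  shows "G4iSLt \<Gamma> c"
proof -
  have "G4iSLt (add_mset b (add_mset a \<Gamma>)) d"
    using AndL_inversion[OF assms(2)] by (simp add: add_mset_commute)
  then have "G4iSLt \<Gamma> (Imp a (Imp b d))" by (rule G4iSLt.ImpR[OF G4iSLt.ImpR])
  from cut_subformula_same_context[OF cut this main] show ?thesis by simp
qed

lemma cut_principal_OrImp:
  assumes cut: "cut_below (cut_measure (Imp (Or a b) d) \<Gamma> c)"
    and "G4iSLt (add_mset (Or a b) \<Gamma>) d"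
    and main: "G4iSLt (add_mset (Imp a d) (add_mset (Imp b d) \<Gamma>)) c"
  shows "G4iSLt \<Gamma> c"
proof -
  have ad: "G4iSLt \<Gamma> (Imp a d)" and bd: "G4iSLt \<Gamma> (Imp b d)"
    using OrL_inversion[OF assms(2)] by (simp_all add: G4iSLt.ImpR)
  from cut_subformula_add_mset[OF cut weakening[OF ad] main]
  have "G4iSLt (add_mset (Imp b d) \<Gamma>) c" by simp
  from cut_subformula_same_context[OF cut bd this] show ?thesis by simp
qed

lemma cut_principal_ImpImp:
  assumes cut: "cut_below (cut_measure (Imp (Imp a b) d) \<Gamma> c)"
    and right: "G4iSLt (add_mset (Imp a b) \<Gamma>) d"
    and side: "G4iSLt (add_mset (Imp b d) \<Gamma>) (Imp a b)" and main: "G4iSLt (add_mset d \<Gamma>) c"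
  shows "G4iSLt \<Gamma> c"
proof -
  have "G4iSLt (add_mset a (add_mset b \<Gamma>)) b"
    using identity_and_modus_ponens(1)[of b "add_mset a \<Gamma>"] by (simp add: add_mset_commute)
  then have ab: "G4iSLt (add_mset b \<Gamma>) (Imp a b)" by (rule G4iSLt.ImpR)
  have "G4iSLt (add_mset (Imp a b) (add_mset b \<Gamma>)) d"
    using weakening[OF right, of b] by (simp add: add_mset_commute)
  from cut_subformula_add_mset[OF cut ab this] have "G4iSLt (add_mset b \<Gamma>) d" by simp
  then have "G4iSLt \<Gamma> (Imp b d)" by (rule G4iSLt.ImpR)
  from cut_subformula_same_context[OF cut this side] have "G4iSLt \<Gamma> (Imp a b)" by simp
  from cut_subformula_same_context[OF cut this right] have "G4iSLt \<Gamma> d" by simp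
  from cut_subformula_same_context[OF cut this main] show ?thesis by simp
qed

lemma cut_principal_BoxImp:
  assumes cut: "cut_below (cut_measure (Imp (Box a) b) \<Gamma> c)"
    and right: "G4iSLt (add_mset (Box a) \<Gamma>) b"
    and side: "G4iSLt (add_mset b (add_mset (Box a) (image_mset unbox \<Gamma>))) a"
    and main: "G4iSLt (add_mset b \<Gamma>) c"
  shows "G4iSLt \<Gamma> c"
proof -
  have unboxed: "G4iSLt ({#Box a#} + image_mset unbox \<Gamma>) b"
    using unbox_antecedents[of \<Gamma> "{#Box a#}"] right by (simp add: add.commute)
  have "G4iSLt ({#Box a#} + image_mset unbox \<Gamma>) a"
    by (rule cut_subformula[OF cut antecedent_weight_unbox, where B=b])
      (use side unboxed in \<open>simp_all add: add_mset_commute\<close>)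
  then have "G4iSLt \<Gamma> (Box a)" by (simp add: SLtR_unbox)
  from cut_subformula_same_context[OF cut this right] have "G4iSLt \<Gamma> b" by simp
  from cut_subformula_same_context[OF cut this main] show ?thesis by simp
qed

lemma cut_principal:
  assumes "cut_below (cut_measure A \<Gamma> c)"
    and "right_premises G4iSLt \<Gamma> A" and "left_premises G4iSLt A \<Gamma> c"
  shows "G4iSLt \<Gamma> c"
proof (cases A rule: main_actives.cases)
  case (1 a b)
  with assms show ?thesis using cut_principal_And[of a b \<Gamma> c] by (simp add: left_premises_def)
next
  case (2 a b)
  with assms show ?thesis using cut_principal_Or[of a b \<Gamma> c] by (simp add: left_premises_def)
next
  case (3 p a)
  with assms show ?thesis using cut_principal_PImp[of p a \<Gamma> c] by (simp add: left_premises_def)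
next
  case (4 a b d)
  with assms show ?thesis using cut_principal_AndImp[of a b d \<Gamma> c] by (simp add: left_premises_def)
next
  case (5 a b d)
  with assms show ?thesis using cut_principal_OrImp[of a b d \<Gamma> c] by (simp add: left_premises_def)
next
  case (6 a b d)
  with assms show ?thesis using cut_principal_ImpImp[of a b d \<Gamma> c] by (simp add: left_premises_def)
next
  case (7 a b)
  with assms show ?thesis using cut_principal_BoxImp[of a b \<Gamma> c] by (simp add: left_premises_def)
qed (use assms(3) in \<open>simp_all add: left_premises_def\<close>)

text \<open>The first step is Dyckhoff's lemma: in the left premise, \<open>(a \<rightarrow> b) \<rightarrow> d\<close> may be
replaced by \<open>a, b \<rightarrow> d\<close>.\<close>

lemma cut_ImpImpL_side:
  fixes a b d :: form defines "F \<equiv> Imp (Imp a b) d"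
  assumes cut: "cut_below (cut_measure A (add_mset F K) c)"
    and left: "G4iSLt (add_mset F K) A"
    and side: "G4iSLt (add_mset (Imp b d) (add_mset A K)) (Imp a b)"
  shows "G4iSLt (add_mset (Imp b d) K) (Imp a b)"
proof -
  have "G4iSLt ({#a, Imp b d#} + K) A"
  proof (rule replace_antecedent[OF left order_refl])
    fix \<Gamma> e
    assume bound: "sequent_measure (add_mset F \<Gamma>) e \<le> sequent_measure (add_mset F K) A"
      and "left_premises G4iSLt F \<Gamma> e"
    then have side': "G4iSLt (add_mset (Imp b d) \<Gamma>) (Imp a b)" and main: "G4iSLt (add_mset d \<Gamma>) e"
      by (simp_all add: F_def left_premises_def)
    have "G4iSLt (add_mset d (add_mset b (add_mset a \<Gamma>))) e"
      using weakening[OF weakening[OF main, of a], of b] by (simp add: add_mset_commute)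
    then have "G4iSLt (add_mset (Imp b d) (add_mset b (add_mset a \<Gamma>))) e"
      by (rule identity_and_modus_ponens(2))
    then have "G4iSLt (add_mset b (add_mset a (add_mset (Imp b d) \<Gamma>))) e"
      by (simp add: add_mset_commute)
    from cut_belowD[OF cut[unfolded F_def] cut_measure_ImpImpL_inversion[OF bound[unfolded F_def]]
        ImpR_inversion[OF side'] this]
    show "G4iSLt ({#a, Imp b d#} + \<Gamma>) e" by simp
  qed (simp_all add: F_def)
  moreover have "G4iSLt (add_mset A (add_mset a (add_mset (Imp b d) K))) b"
    using ImpR_inversion[OF side] by (simp add: add_mset_commute)
  ultimately have "G4iSLt (add_mset a (add_mset (Imp b d) K)) b"
    using cut_belowD[OF cut[unfolded F_def] cut_measure_mono[OF sequent_measure_ImpImpL_inverted]]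
    by (simp add: F_def)
  then show ?thesis by (rule G4iSLt.ImpR)
qed

lemma cut_BoxImpL_side:
  assumes cut: "cut_below (cut_measure A (add_mset (Imp (Box a) b) K) c)"
    and left: "G4iSLt (add_mset (Imp (Box a) b) K) A"
    and left_right: "right_premises G4iSLt (add_mset (Imp (Box a) b) K) A"
    and side: "G4iSLt (add_mset b (add_mset (Box a) (image_mset unbox (add_mset A K)))) a"
  shows "G4iSLt (add_mset b (add_mset (Box a) (image_mset unbox K))) a"
proof (rule cut_unboxed_context[OF cut sequent_measure_BoxImpL_side])
  have "G4iSLt (image_mset unbox K + {#b#}) A"
    using unbox_antecedents[of K "{#b#}"] BoxImpL_inversion[OF left] by (simp add: add.commute)
  from weakening[OF this, of "Box a"]
  show "G4iSLt (add_mset b (add_mset (Box a) (image_mset unbox K))) A"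
    by (simp add: add_mset_commute)
  show "G4iSLt (add_mset (Box e) (add_mset b (add_mset (Box a) (image_mset unbox K)))) e"
    if "A = Box e" for e
  proof -
    have "G4iSLt (add_mset (Imp (Box a) b) (add_mset (Box e) (image_mset unbox K))) e"
      using left_right that by (simp add: add_mset_commute)
    from weakening[OF BoxImpL_inversion[OF this], of "Box a"] show ?thesis
      by (simp add: add_mset_commute)
  qed
  show "G4iSLt (add_mset (unbox A) (add_mset b (add_mset (Box a) (image_mset unbox K)))) a"
    using side by (simp add: add_mset_commute)
qed

lemma cut_left_side_condition:
  assumes cut: "cut_below (cut_measure A (add_mset X K) c)"
    and left: "G4iSLt (add_mset X K) A" "right_premises G4iSLt (add_mset X K) A"
    and side: "left_side_condition G4iSLt X (add_mset A K)"
  shows "left_side_condition G4iSLt X K"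
proof (cases X rule: main_actives.cases)
  case (3 p a)
  with left(2) side show ?thesis by (cases A) auto
next
  case (6 a b d)
  with cut left(1) side show ?thesis using cut_ImpImpL_side by simp
next
  case (7 a b)
  with cut left side show ?thesis using cut_BoxImpL_side by simp
qed (use side in simp_all)

lemma cut_left_premise_left_rule:
  assumes cut: "cut_below (cut_measure A (add_mset X \<Delta>) c)"
    and left: "left_premises G4iSLt X \<Delta> A"
    and right: "G4iSLt (add_mset A (add_mset X \<Delta>)) c"
  shows "G4iSLt (add_mset X \<Delta>) c"
proof (rule G4iSLt_left_rule)
  have "G4iSLt (Y + \<Delta>) c" if Y: "Y \<in> set (main_actives X)" for Y
  proof (rule cut_belowD[OF cut cut_measure_mono[OF sequent_measure_main_less[OF Y]]])
    show "G4iSLt (Y + \<Delta>) A" using left Y by (simp add: left_premises_def)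
    show "G4iSLt (add_mset A (Y + \<Delta>)) c"
      using left_inversion[of X "add_mset A \<Delta>" c Y] right Y by (simp add: add_mset_commute)
  qed
  with left show "left_premises G4iSLt X \<Delta> c" by (simp add: left_premises_def)
qed

lemma cut_right_premise_left_rule:
  assumes cut: "cut_below (cut_measure A (add_mset X K) c)"
    and left: "G4iSLt (add_mset X K) A" "right_premises G4iSLt (add_mset X K) A"
    and right: "left_premises G4iSLt X (add_mset A K) c"
  shows "G4iSLt (add_mset X K) c"
proof (rule G4iSLt_left_rule)
  have "G4iSLt (Y + K) c" if Y: "Y \<in> set (main_actives X)" for Y
  proof (rule cut_belowD[OF cut cut_measure_mono[OF sequent_measure_main_less[OF Y]]])
    show "G4iSLt (Y + K) A" using left_inversion[OF left(1) Y] .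
    show "G4iSLt (add_mset A (Y + K)) c" using right Y by (simp add: left_premises_def)
  qed
  moreover have "left_side_condition G4iSLt X K"
    using cut_left_side_condition[OF cut left] right by (simp add: left_premises_def)
  ultimately show "left_premises G4iSLt X K c" by (simp add: left_premises_def)
qed

lemma cut_right_premise_right_rule:
  assumes cut: "cut_below (cut_measure A \<Gamma> c)"
    and left: "G4iSLt \<Gamma> A" "right_premises G4iSLt \<Gamma> A"
    and right: "right_premises G4iSLt (add_mset A \<Gamma>) c"
  shows "G4iSLt \<Gamma> c"
proof (rule G4iSLt_right_rule)
  have cut_subformula_succedent: "G4iSLt \<Gamma> d"
    if "weight d < weight c" "G4iSLt (add_mset A \<Gamma>) d" for d
    using cut_belowD[OF cut cut_measure_mono[OF sequent_measure_succedent_less] left(1)] that .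
  show "right_premises G4iSLt \<Gamma> c"
  proof (cases c)
    case (Imp a b)
    have "G4iSLt (add_mset a \<Gamma>) b"
    proof (rule cut_belowD[OF cut[unfolded Imp] cut_measure_mono[OF sequent_measure_ImpR]])
      show "G4iSLt (add_mset a \<Gamma>) A" using weakening[OF left(1)] .
      show "G4iSLt (add_mset A (add_mset a \<Gamma>)) b" using right Imp by (simp add: add_mset_commute)
    qed
    with Imp show ?thesis by simp
  next
    case (Box a)
    have "G4iSLt (add_mset (Box a) (image_mset unbox \<Gamma>)) a"
    proof (rule cut_unboxed_context[OF cut[unfolded Box] sequent_measure_SLtR])
      have "G4iSLt (image_mset unbox \<Gamma>) A" using unbox_antecedents[of \<Gamma> "{#}"] left(1) by simp
      from weakening[OF this, of "Box a"]
      show "G4iSLt (add_mset (Box a) (image_mset unbox \<Gamma>)) A" .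
      show "G4iSLt (add_mset (Box e) (add_mset (Box a) (image_mset unbox \<Gamma>))) e"
        if "A = Box e" for e
        using weakening[of _ e "Box a"] left(2) that by (simp add: add_mset_commute)
      show "G4iSLt (add_mset (unbox A) (add_mset (Box a) (image_mset unbox \<Gamma>))) a"
        using right Box by (simp add: add_mset_commute)
    qed
    with Box show ?thesis by simp
  qed (use right in \<open>auto intro: cut_subformula_succedent\<close>)
qed

lemma cut_left_premise_right_rule:
  assumes cut: "cut_below (cut_measure A \<Gamma> c)"
    and left: "G4iSLt \<Gamma> A" "right_premises G4iSLt \<Gamma> A"
    and right: "G4iSLt (add_mset A \<Gamma>) c"
  shows "G4iSLt \<Gamma> c"
  using right
proof (cases rule: G4iSLt_uniform_cases)
  case BotL
  with left(2) show ?thesis by (auto intro: G4iSLt_BotL_mem)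
next
  case (IdP p)
  with left(2) show ?thesis by (auto intro: G4iSLt_IdP_mem)
next
  case (Left X \<Delta>)
  show ?thesis
  proof (cases "X = A")
    case True
    with Left(1) have "\<Delta> = \<Gamma>" by simp
    with True Left(2) cut left(2) show ?thesis by (simp add: cut_principal)
  next
    case False
    with Left(1) obtain K where "\<Gamma> = add_mset X K" "\<Delta> = add_mset A K"
      by (auto simp: add_eq_conv_ex)
    with cut left Left(2) show ?thesis by (simp add: cut_right_premise_left_rule)
  qed
next
  case Right
  with cut left show ?thesis by (rule cut_right_premise_right_rule)
qed

lemma cut_step:
  assumes cut: "cut_below (cut_measure A \<Gamma> c)"
    and left: "G4iSLt \<Gamma> A" and right: "G4iSLt (add_mset A \<Gamma>) c"
  shows "G4iSLt \<Gamma> c"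
  using left
proof (cases rule: G4iSLt_uniform_cases)
  case BotL
  then show ?thesis by (rule G4iSLt_BotL_mem)
next
  case (IdP p)
  then obtain \<Gamma>' where "\<Gamma> = add_mset (Var p) \<Gamma>'" by (blast dest: multi_member_split)
  with IdP right show ?thesis by (simp add: contraction_atom)
next
  case (Left X \<Delta>)
  with cut right show ?thesis by (simp add: cut_left_premise_left_rule)
next
  case Right
  with cut left right show ?thesis by (simp add: cut_left_premise_right_rule)
qed

theorem theorem2:
  fixes \<Gamma> :: "form multiset" and \<phi> \<chi> :: form
  assumes "G4iSLt \<Gamma> \<phi>"
    and "G4iSLt (add_mset \<phi> \<Gamma>) \<chi>"
  shows "G4iSLt \<Gamma> \<chi>"
proof -
  have "cut_below M" for M
  proof (induction M rule: less_induct)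
    case (less M)
    show ?case
      unfolding cut_below_def using cut_step[OF less.IH] by blast
  qed
  then show ?thesis using assms by (rule cut_step)
qed

end
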